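(* Let $\alpha\ge0$ and $\beta>0$. Then $D_+^\alpha(\mathcal{C}_\beta f)=\mathcal{C}_\beta(D_+^\alpha f)$ for all $f\in\mathcal{S}_+$, where $D_+^\alpha f(t)=\frac{1}{\Gamma(\alpha+1)}t^\alpha W_+^\alpha f(t)$ for $t\ge0$.
   Context: $\mathcal{S}_+$ denotes the Schwartz class on $[0,\infty)$. For $\alpha>0$ and $f\in\mathcal{S}_+$, the Weyl fractional integral is $W_+^{-\alpha}f(t)=\frac{1}{\Gamma(\alpha)}\int_t^\infty (s-t)^{\alpha-1}f(s)\,ds$, and the Weyl fractional derivative is $W_+^{\alpha}f(t)=(-1)^n\frac{d^n}{dt^n}W_+^{-(n-\alpha)}f(t)$ with $n=[\alpha]+1$; $W_+^0$ is the identity (and $W_+^\alpha$ is applied likewise to functions for which these expressions make sense). The generalized Cesàro operator is $\mathcal{C}_\beta f(t)=\frac{\beta}{t^\beta}\int_0^t (t-s)^{\beta-1}f(s)\,ds=\beta\int_0^1(1-r)^{\beta-1}f(tr)\,dr$ for $t>0$. *)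

theory Defs
  imports "HOL-Analysis.Analysis"
begin

text \<open>Functions are complex-valued functions of a real variable; only their
values on [0,\<infinity>) matter.\<close>

definition schwartz_plus :: "(real \<Rightarrow> complex) \<Rightarrow> bool" where
  "schwartz_plus f \<longleftrightarrow>
     (\<exists>fs :: nat \<Rightarrow> real \<Rightarrow> complex.
        (\<forall>t\<ge>0. fs 0 t = f t) \<and>
        (\<forall>n. \<forall>t\<ge>0. (fs n has_vector_derivative fs (Suc n) t) (at t within {0..})) \<and>
        (\<forall>m n. \<exists>C. \<forall>t\<ge>0. norm (t ^ m *\<^sub>R fs n t) \<le> C))"

fun nth_deriv :: "nat \<Rightarrow> (real \<Rightarrow> complex) \<Rightarrow> real \<Rightarrow> complex" where
  "nth_deriv 0 g = g"
| "nth_deriv (Suc k) g = (\<lambda>t. vector_derivative (nth_deriv k g) (at t within {0..}))"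

definition weyl_int :: "real \<Rightarrow> (real \<Rightarrow> complex) \<Rightarrow> real \<Rightarrow> complex" where
  "weyl_int \<alpha> f t = (1 / Gamma \<alpha>) *\<^sub>R integral {t..} (\<lambda>s. ((s - t) powr (\<alpha> - 1)) *\<^sub>R f s)"

definition weyl_deriv :: "real \<Rightarrow> (real \<Rightarrow> complex) \<Rightarrow> real \<Rightarrow> complex" where
  "weyl_deriv \<alpha> f =
     (if \<alpha> \<in> \<nat> then (\<lambda>t. (-1) ^ nat \<lfloor>\<alpha>\<rfloor> * nth_deriv (nat \<lfloor>\<alpha>\<rfloor>) f t)
      else (let n = nat \<lfloor>\<alpha>\<rfloor> + 1 in
            (\<lambda>t. (-1) ^ n * nth_deriv n (weyl_int (real n - \<alpha>) f) t)))"

text \<open>D_+^\<alpha> f(t) = t^\<alpha> W_+^\<alpha> f(t) / \<Gamma>(\<alpha>+1), with t^0 = 1.\<close>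
definition D_plus :: "real \<Rightarrow> (real \<Rightarrow> complex) \<Rightarrow> real \<Rightarrow> complex" where
  "D_plus \<alpha> f t = ((if \<alpha> = 0 then 1 else t powr \<alpha>) / Gamma (\<alpha> + 1)) *\<^sub>R weyl_deriv \<alpha> f t"

definition cesaro :: "real \<Rightarrow> (real \<Rightarrow> complex) \<Rightarrow> real \<Rightarrow> complex" where
  "cesaro \<beta> f t = \<beta> *\<^sub>R integral {0..1} (\<lambda>r. ((1 - r) powr (\<beta> - 1)) *\<^sub>R f (t * r))"

end

theory Submission
  imports Defs
begin

text \<open>Differentiating \<open>n\<close> times under the
  integral sign produces a factor \<open>r\<^sup>n\<close>, so \<open>t\<^sup>n (\<C>\<^sub>\<beta> f)\<^sup>(\<^sup>n\<^sup>) (t) = \<C>\<^sub>\<beta> (s\<^sup>n f\<^sup>(\<^sup>n\<^sup>)) (t)\<close>;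
  this settles integer \<open>\<alpha>\<close>. Otherwise let \<open>n = \<lfloor>\<alpha>\<rfloor> + 1\<close> and \<open>\<gamma> = n - \<alpha> \<in> (0,1)\<close>. Fubini's theorem
  and the substitution \<open>v \<mapsto> r v\<close> give
  \<open>W\<^sub>+\<^sup>-\<^sup>\<gamma> (\<C>\<^sub>\<beta> f) (t) = \<beta> \<integral>\<^sub>0\<^sup>1 (1 - r)\<^sup>\<beta>\<^sup>-\<^sup>1 r\<^sup>-\<^sup>\<gamma> (W\<^sub>+\<^sup>-\<^sup>\<gamma> f) (t r) dr\<close>, and differentiating
  this \<open>n\<close> times turns \<open>r\<^sup>-\<^sup>\<gamma>\<close> into \<open>r\<^sup>\<alpha>\<close>, which combines with \<open>t\<^sup>\<alpha>\<close> as before. All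
  interchanges of limits and integrals are justified by dominated convergence, using that the
  derivatives of \<open>f\<close> are bounded and decay like \<open>s\<^sup>-\<^sup>2\<close>.\<close>

lemma has_vector_derivative_at_iff_diff_quotient:
  fixes f :: "real \<Rightarrow> 'a::real_normed_vector"
  shows "(f has_vector_derivative v) (at x) \<longleftrightarrow> ((\<lambda>y. (f y - f x) /\<^sub>R (y - x)) \<longlongrightarrow> v) (at x)"
proof -
  have "norm ((f y - f x) - (y - x) *\<^sub>R v) / norm (y - x) = norm ((f y - f x) /\<^sub>R (y - x) - v)"
    if "y \<noteq> x" for y
  proof -
    have "(f y - f x) /\<^sub>R (y - x) - v = (1 / (y - x)) *\<^sub>R ((f y - f x) - (y - x) *\<^sub>R v)"
      using that by (simp add: scaleR_diff_right divide_inverse)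
    then show ?thesis
      using that by (simp add: divide_inverse mult.commute)
  qed
  then have "\<forall>\<^sub>F y in at x. norm ((f y - f x) - (y - x) *\<^sub>R v) / norm (y - x)
                            = norm ((f y - f x) /\<^sub>R (y - x) - v)"
    by (auto simp: eventually_at_filter)
  then have "(f has_vector_derivative v) (at x) \<longleftrightarrow>
             ((\<lambda>y. norm ((f y - f x) /\<^sub>R (y - x) - v)) \<longlongrightarrow> 0) (at x)"
    unfolding has_vector_derivative_def has_derivative_iff_norm
    by (simp add: bounded_linear_scaleR_left tendsto_cong)
  then show ?thesis
    by (simp add: tendsto_norm_zero_iff Lim_null[symmetric])
qed

lemma norm_diff_le_vector_derivative_bound:
  fixes g :: "real \<Rightarrow> 'a::real_normed_vector"
  assumes "convex S"
    and "\<And>s. s \<in> S \<Longrightarrow> (g has_vector_derivative g' s) (at s)"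
    and "\<And>s. s \<in> S \<Longrightarrow> norm (g' s) \<le> B"
    and "x \<in> S" "t \<in> S"
  shows "norm (g t - g x) \<le> B * \<bar>t - x\<bar>"
proof -
  have "norm (g t - g x) \<le> B * norm (t - x)"
  proof (rule differentiable_bound[where f'="\<lambda>s h. h *\<^sub>R g' s"])
    show "(g has_derivative (\<lambda>h. h *\<^sub>R g' s)) (at s within S)" if "s \<in> S" for s
      using assms(2)[OF that] has_derivative_at_withinI unfolding has_vector_derivative_def by blast
    show "onorm (\<lambda>h. h *\<^sub>R g' s) \<le> B" if "s \<in> S" for s
      using assms(3)[OF that] onorm_scaleR_left[OF bounded_linear_ident, of "g' s"]
            onorm_id[where 'a=real] by simp
  qed (use assms in auto)
  then show ?thesis by simp
qed

lemma has_vector_derivative_scaleR_const: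
  "(g has_vector_derivative g') F \<Longrightarrow> ((\<lambda>x. c *\<^sub>R g x) has_vector_derivative c *\<^sub>R g') F"
  by (rule bounded_linear.has_vector_derivative[OF bounded_linear_scaleR_right])

text \<open>The difference quotients converge pointwise and, by the mean value inequality, are
  dominated by \<open>B\<close>.\<close>
lemma has_vector_derivative_lborel_integral:
  fixes g g' :: "real \<Rightarrow> real \<Rightarrow> 'b::{banach, second_countable_topology}"
  assumes "d > 0"
    and int: "\<And>s. s \<in> ball x d \<Longrightarrow> integrable lborel (g s)"
    and der: "\<And>s y. s \<in> ball x d \<Longrightarrow> ((\<lambda>s. g s y) has_vector_derivative g' s y) (at s)"
    and "integrable lborel B"
    and bnd: "\<And>s y. s \<in> ball x d \<Longrightarrow> norm (g' s y) \<le> B y"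
    and "g' x \<in> borel_measurable lborel"
  shows "((\<lambda>s. \<integral>y. g s y \<partial>lborel) has_vector_derivative (\<integral>y. g' x y \<partial>lborel)) (at x)"
  unfolding has_vector_derivative_at_iff_diff_quotient tendsto_at_iff_sequentially o_def
proof (intro allI impI)
  fix X :: "nat \<Rightarrow> real"
  assume X: "\<forall>i. X i \<in> UNIV - {x}" and "X \<longlonglongrightarrow> x"
  then have "\<forall>\<^sub>F i in sequentially. dist (X i) x < d"
    using \<open>d > 0\<close> tendsto_iff by blast
  then obtain N where N: "\<And>i. i \<ge> N \<Longrightarrow> X i \<in> ball x d"
    by (auto simp: eventually_sequentially dist_commute)
  have x: "x \<in> ball x d" using \<open>d > 0\<close> by simp
  define q where "q i y = (g (X (i + N)) y - g x y) /\<^sub>R (X (i + N) - x)" for i y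
  have "(\<lambda>i. \<integral>y. q i y \<partial>lborel) \<longlonglongrightarrow> (\<integral>y. g' x y \<partial>lborel)"
  proof (rule integral_dominated_convergence[where w=B])
    show "q i \<in> borel_measurable lborel" for i
      unfolding q_def using int[OF N[of "i + N"]] int[OF x] by measurable
    have "(\<lambda>i. X (i + N)) \<longlonglongrightarrow> x"
      using \<open>X \<longlonglongrightarrow> x\<close> by (rule LIMSEQ_ignore_initial_segment)
    then show "AE y in lborel. (\<lambda>i. q i y) \<longlonglongrightarrow> g' x y"
      using der[OF x] X unfolding q_def has_vector_derivative_at_iff_diff_quotient
        tendsto_at_iff_sequentially o_def by auto
    show "AE y in lborel. norm (q i y) \<le> B y" for i
    proof (rule AE_I2)
      fix y
      have "norm (g (X (i + N)) y - g x y) \<le> B y * \<bar>X (i + N) - x\<bar>"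
        by (rule norm_diff_le_vector_derivative_bound[where g'="\<lambda>s. g' s y" and S="ball x d"])
           (use der bnd N x in auto)
      moreover have "norm (q i y) = norm (g (X (i + N)) y - g x y) / \<bar>X (i + N) - x\<bar>"
        unfolding q_def by (simp add: divide_inverse mult.commute)
      ultimately show "norm (q i y) \<le> B y"
        using X by (simp add: pos_divide_le_eq)
    qed
  qed fact+
  moreover have "(\<integral>y. q i y \<partial>lborel) =
      ((\<integral>y. g (X (i + N)) y \<partial>lborel) - (\<integral>y. g x y \<partial>lborel)) /\<^sub>R (X (i + N) - x)" for i
    unfolding q_def using int[OF N[of "i + N"]] int[OF x] by simp
  ultimately have "(\<lambda>i. ((\<integral>y. g (X (i + N)) y \<partial>lborel) - (\<integral>y. g x y \<partial>lborel)) /\<^sub>R (X (i + N) - x))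
                    \<longlonglongrightarrow> (\<integral>y. g' x y \<partial>lborel)"
    by simp
  then show "(\<lambda>i. ((\<integral>y. g (X i) y \<partial>lborel) - (\<integral>y. g x y \<partial>lborel)) /\<^sub>R (X i - x))
                    \<longlonglongrightarrow> (\<integral>y. g' x y \<partial>lborel)"
    by (rule LIMSEQ_offset)
qed

lemma nth_deriv_eq_on_pos:
  fixes h :: "nat \<Rightarrow> real \<Rightarrow> complex"
  assumes "\<And>k x. x > 0 \<Longrightarrow> (h k has_vector_derivative h (Suc k) x) (at x)"
    and "\<And>x. x > 0 \<Longrightarrow> G x = h 0 x"
    and "x > 0"
  shows "nth_deriv k G x = h k x"
  using \<open>x > 0\<close>
proof (induction k arbitrary: x)
  case 0
  then show ?case using assms(2) by simp
next
  case (Suc k)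
  have "(nth_deriv k G has_vector_derivative h (Suc k) x) (at x)"
    by (rule has_vector_derivative_transform_within_open[OF assms(1)[OF Suc.prems], of "{0<..}"])
       (use Suc in auto)
  moreover have "at x within {0..} = at x"
    by (rule at_within_interior) (use Suc.prems in simp)
  ultimately show ?case by (simp add: vector_derivative_at)
qed

lemma integrable_beta_weight:
  assumes "\<beta> > 0" "c > -1"
  shows "integrable lborel (\<lambda>r::real. indicator {0<..<1} r * ((1 - r) powr (\<beta> - 1) * r powr c))"
proof -
  have "set_integrable lborel {0..1} (\<lambda>r::real. r powr c * (1 - r) powr (\<beta> - 1))"
    using integrable_Beta[of "c + 1" \<beta>] assms by simp
  then have "set_integrable lborel {0<..<1} (\<lambda>r::real. r powr c * (1 - r) powr (\<beta> - 1))"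
    by (rule set_integrable_subset) (auto simp: greaterThanLessThan_subseteq_atLeastAtMost_iff)
  then show ?thesis
    unfolding set_integrable_def by (simp add: mult.commute)
qed

lemma integrable_powr_minus_two_at_top:
  "integrable lborel (\<lambda>u::real. indicator {1..} u * u powr (-2))"
proof -
  have "(\<lambda>u::real. u powr (-2)) absolutely_integrable_on {1..}"
    using has_integral_powr_to_inf[of "-2" 1]
    by (subst absolutely_integrable_on_iff_nonneg) (auto simp: integrable_on_def)
  then show ?thesis
    unfolding absolutely_integrable_on_def set_integrable_def
    by (subst (asm) integrable_completion) auto
qed

definition weyl_majorant :: "real \<Rightarrow> real \<Rightarrow> real \<Rightarrow> real \<Rightarrow> real" where
  "weyl_majorant \<gamma> C0 C2 u =
     C0 * (indicator {0<..<1} u * u powr (\<gamma> - 1)) + C2 * (indicator {1..} u * u powr (-2))"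

lemma integrable_weyl_majorant:
  assumes "\<gamma> > 0"
  shows "integrable lborel (weyl_majorant \<gamma> C0 C2)"
proof -
  have "integrable lborel (\<lambda>u. indicator {0<..<1} u * ((1 - u) powr (1 - 1) * u powr (\<gamma> - 1)))"
    by (rule integrable_beta_weight) (use assms in auto)
  also have "(\<lambda>u. indicator {0<..<1} u * ((1 - u) powr (1 - 1) * u powr (\<gamma> - 1))) =
             (\<lambda>u. indicator {0<..<1} u * u powr (\<gamma> - 1))"
    by (auto simp: fun_eq_iff indicator_def)
  finally show ?thesis
    unfolding weyl_majorant_def using integrable_powr_minus_two_at_top by auto
qed

lemma norm_weyl_kernel_le_majorant:
  fixes F :: "real \<Rightarrow> 'a::real_normed_vector"
  assumes "0 < \<gamma>" "\<gamma> \<le> 1" "x \<ge> 0"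
    and C0: "\<And>y. y \<ge> 0 \<Longrightarrow> norm (F y) \<le> C0"
    and C2: "\<And>y. y \<ge> 0 \<Longrightarrow> y ^ 2 * norm (F y) \<le> C2"
  shows "norm ((indicator {0<..} u * u powr (\<gamma> - 1)) *\<^sub>R F (x + u)) \<le> weyl_majorant \<gamma> C0 C2 u"
proof -
  have "C0 \<ge> 0" using C0[of 0] norm_ge_zero order_trans by blast
  have "C2 \<ge> 0" using C2[of 0] by simp
  consider "u \<le> 0" | "0 < u" "u < 1" | "u \<ge> 1" by linarith
  then show ?thesis
  proof cases
    case 1
    then show ?thesis
      using \<open>C0 \<ge> 0\<close> \<open>C2 \<ge> 0\<close> by (simp add: weyl_majorant_def)
  next
    case 2
    then have "u powr (\<gamma> - 1) * norm (F (x + u)) \<le> u powr (\<gamma> - 1) * C0"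
      using assms by (intro mult_left_mono C0) auto
    then show ?thesis
      using 2 \<open>C2 \<ge> 0\<close> by (simp add: weyl_majorant_def mult.commute)
  next
    case 3
    have "u ^ 2 * norm (F (x + u)) \<le> (x + u) ^ 2 * norm (F (x + u))"
      using 3 assms by (intro mult_right_mono power_mono) auto
    also have "\<dots> \<le> C2"
      using 3 assms by (intro C2) auto
    finally have "norm (F (x + u)) \<le> C2 * u powr (-2)"
      using 3 by (simp add: powr_minus powr_realpow field_simps)
    moreover have "u powr (\<gamma> - 1) \<le> 1"
      using 3 assms powr_mono[of "\<gamma> - 1" 0 u] by simp
    ultimately have "u powr (\<gamma> - 1) * norm (F (x + u)) \<le> C2 * u powr (-2)"
      by (meson mult_left_le_one_le norm_ge_zero order_trans powr_ge_zero)
    then show ?thesis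
      using 3 by (simp add: weyl_majorant_def)
  qed
qed

definition cesaro_moment :: "real \<Rightarrow> real \<Rightarrow> (real \<Rightarrow> complex) \<Rightarrow> real \<Rightarrow> complex" where
  "cesaro_moment \<beta> c h t =
     (\<integral>r. (indicator {0<..<1} r * ((1 - r) powr (\<beta> - 1) * r powr c)) *\<^sub>R h (t * r) \<partial>lborel)"

lemma borel_measurable_cesaro_moment_integrand:
  fixes h :: "real \<Rightarrow> complex"
  assumes "continuous_on {0<..} h" "t > 0"
  shows "(\<lambda>r. (indicator {0<..<1} r * ((1 - r) powr (\<beta> - 1) * r powr c)) *\<^sub>R h (t * r))
           \<in> borel_measurable lborel"
proof -
  have "continuous_on {0<..<1} (\<lambda>r. ((1 - r) powr (\<beta> - 1) * r powr c) *\<^sub>R h (t * r))"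
    using assms by (auto intro!: continuous_intros continuous_on_compose2[OF assms(1)])
  then have "(\<lambda>r. indicator {0<..<1} r *\<^sub>R (((1 - r) powr (\<beta> - 1) * r powr c) *\<^sub>R h (t * r)))
               \<in> borel_measurable borel"
    by (rule borel_measurable_continuous_on_indicator[rotated]) simp
  then show ?thesis by simp
qed

lemma integrable_cesaro_moment_integrand:
  fixes h :: "real \<Rightarrow> complex"
  assumes "\<beta> > 0" "c > -1" "continuous_on {0<..} h" "\<And>x. x > 0 \<Longrightarrow> norm (h x) \<le> M" "t > 0"
  shows "integrable lborel (\<lambda>r. (indicator {0<..<1} r * ((1 - r) powr (\<beta> - 1) * r powr c)) *\<^sub>R h (t * r))"
proof (rule Bochner_Integration.integrable_bound)
  show "integrable lborel (\<lambda>r. M * (indicator {0<..<1} r * ((1 - r) powr (\<beta> - 1) * r powr c)))"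
    using integrable_beta_weight[OF assms(1,2)] by simp
  show "(\<lambda>r. (indicator {0<..<1} r * ((1 - r) powr (\<beta> - 1) * r powr c)) *\<^sub>R h (t * r))
          \<in> borel_measurable lborel"
    using assms(3,5) by (rule borel_measurable_cesaro_moment_integrand)
  have "norm ((indicator {0<..<1} r * ((1 - r) powr (\<beta> - 1) * r powr c)) *\<^sub>R h (t * r))
          \<le> norm (M * (indicator {0<..<1} r * ((1 - r) powr (\<beta> - 1) * r powr c)))" for r
    using assms(4)[of "t * r"] assms(5)
    by (cases "r \<in> {0<..<1}") (auto simp: abs_mult intro!: mult_left_mono order_trans[OF _ abs_ge_self])
  then show "AE r in lborel. norm ((indicator {0<..<1} r * ((1 - r) powr (\<beta> - 1) * r powr c)) *\<^sub>R h (t * r))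
          \<le> norm (M * (indicator {0<..<1} r * ((1 - r) powr (\<beta> - 1) * r powr c)))"
    by simp
qed

lemma cesaro_eq_cesaro_moment:
  fixes g :: "real \<Rightarrow> complex"
  assumes "integrable lborel (\<lambda>r. (indicator {0<..<1} r * ((1 - r) powr (\<beta> - 1) * r powr 0)) *\<^sub>R g (t * r))"
  shows "cesaro \<beta> g t = \<beta> *\<^sub>R cesaro_moment \<beta> 0 g t"
proof -
  have "set_integrable lborel {0<..<1} (\<lambda>r. ((1 - r) powr (\<beta> - 1) * r powr 0) *\<^sub>R g (t * r))"
    using assms unfolding set_integrable_def by simp
  then have "cesaro_moment \<beta> 0 g t = integral {0<..<1} (\<lambda>r. ((1 - r) powr (\<beta> - 1) * r powr 0) *\<^sub>R g (t * r))"
    using set_borel_integral_eq_integral(2)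
    unfolding cesaro_moment_def set_lebesgue_integral_def by fastforce
  also have "\<dots> = integral {0<..<1} (\<lambda>r. (1 - r) powr (\<beta> - 1) *\<^sub>R g (t * r))"
    by (rule integral_cong) simp
  also have "\<dots> = integral {0..1} (\<lambda>r. (1 - r) powr (\<beta> - 1) *\<^sub>R g (t * r))"
    by (rule integral_open_interval_real[symmetric])
  finally show ?thesis
    unfolding cesaro_def by simp
qed

lemma has_vector_derivative_cesaro_moment:
  fixes h h' :: "real \<Rightarrow> complex"
  assumes "\<beta> > 0" "c > -1"
    and der: "\<And>x. x > 0 \<Longrightarrow> (h has_vector_derivative h' x) (at x)"
    and "continuous_on {0<..} h'"
    and "\<And>x. x > 0 \<Longrightarrow> norm (h x) \<le> M0" and "\<And>x. x > 0 \<Longrightarrow> norm (h' x) \<le> M1"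
    and "t > 0"
  shows "(cesaro_moment \<beta> c h has_vector_derivative cesaro_moment \<beta> (c + 1) h' t) (at t)"
  unfolding cesaro_moment_def
proof (rule has_vector_derivative_lborel_integral[where d=t])
  have pos: "s > 0" if "s \<in> ball t t" for s
    using that by (auto simp: dist_real_def)
  have "continuous_on {0<..} h"
    using der by (intro continuous_at_imp_continuous_on ballI has_vector_derivative_continuous) auto
  then show "integrable lborel (\<lambda>r. (indicator {0<..<1} r * ((1 - r) powr (\<beta> - 1) * r powr c)) *\<^sub>R h (s * r))"
    if "s \<in> ball t t" for s
    using assms pos[OF that] by (intro integrable_cesaro_moment_integrand) auto
  show "((\<lambda>s. (indicator {0<..<1} r * ((1 - r) powr (\<beta> - 1) * r powr c)) *\<^sub>R h (s * r)) has_vector_derivative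
          (indicator {0<..<1} r * ((1 - r) powr (\<beta> - 1) * r powr (c + 1))) *\<^sub>R h' (s * r)) (at s)"
    if "s \<in> ball t t" for s r
  proof (cases "r \<in> {0<..<1}")
    case True
    have "((\<lambda>s. s * r) has_vector_derivative r) (at s)"
      by (auto intro!: derivative_eq_intros)
    then have "((h \<circ> (\<lambda>s. s * r)) has_vector_derivative r *\<^sub>R h' (s * r)) (at s)"
      using True pos[OF that] by (intro vector_diff_chain_at der) auto
    then have "((\<lambda>s. (indicator {0<..<1} r * ((1 - r) powr (\<beta> - 1) * r powr c)) *\<^sub>R h (s * r))
                 has_vector_derivative
                 (indicator {0<..<1} r * ((1 - r) powr (\<beta> - 1) * r powr c)) *\<^sub>R (r *\<^sub>R h' (s * r))) (at s)"
      unfolding o_def by (rule has_vector_derivative_scaleR_const)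
    moreover have "r powr (c + 1) = r powr c * r"
      using True by (simp add: powr_add)
    ultimately show ?thesis
      by (simp add: mult.assoc)
  qed simp
  show "integrable lborel (\<lambda>r. M1 * (indicator {0<..<1} r * ((1 - r) powr (\<beta> - 1) * r powr (c + 1))))"
    using integrable_beta_weight[OF assms(1), of "c + 1"] assms(2) by simp
  show "norm ((indicator {0<..<1} r * ((1 - r) powr (\<beta> - 1) * r powr (c + 1))) *\<^sub>R h' (s * r))
          \<le> M1 * (indicator {0<..<1} r * ((1 - r) powr (\<beta> - 1) * r powr (c + 1)))"
    if "s \<in> ball t t" for s r
    using assms(6)[of "s * r"] pos[OF that]
    by (cases "r \<in> {0<..<1}") (auto simp: abs_mult mult.commute intro!: mult_left_mono)
  show "(\<lambda>r. (indicator {0<..<1} r * ((1 - r) powr (\<beta> - 1) * r powr (c + 1))) *\<^sub>R h' (t * r))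
          \<in> borel_measurable lborel"
    using assms(4,7) by (rule borel_measurable_cesaro_moment_integrand)
qed fact

lemma nth_deriv_cesaro_moment:
  fixes h :: "nat \<Rightarrow> real \<Rightarrow> complex"
  assumes "\<beta> > 0" "c > -1"
    and der: "\<And>k x. x > 0 \<Longrightarrow> (h k has_vector_derivative h (Suc k) x) (at x)"
    and bnd: "\<And>k. \<exists>M. \<forall>x>0. norm (h k x) \<le> M"
    and "\<And>s. s > 0 \<Longrightarrow> G s = \<beta> *\<^sub>R cesaro_moment \<beta> c (h 0) s"
    and "t > 0"
  shows "nth_deriv n G t = \<beta> *\<^sub>R cesaro_moment \<beta> (c + real n) (h n) t"
proof (rule nth_deriv_eq_on_pos[where h="\<lambda>k s. \<beta> *\<^sub>R cesaro_moment \<beta> (c + real k) (h k) s"])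
  show "((\<lambda>s. \<beta> *\<^sub>R cesaro_moment \<beta> (c + real k) (h k) s) has_vector_derivative
          \<beta> *\<^sub>R cesaro_moment \<beta> (c + real (Suc k)) (h (Suc k)) x) (at x)" if "x > 0" for k x
  proof -
    obtain M0 M1 where "\<forall>x>0. norm (h k x) \<le> M0" "\<forall>x>0. norm (h (Suc k) x) \<le> M1"
      using bnd by meson
    moreover have "continuous_on {0<..} (h (Suc k))"
      using der by (intro continuous_at_imp_continuous_on ballI has_vector_derivative_continuous) auto
    ultimately have "(cesaro_moment \<beta> (c + real k) (h k) has_vector_derivative
                       cesaro_moment \<beta> (c + real k + 1) (h (Suc k)) x) (at x)"
      using assms(1,2) der \<open>x > 0\<close> by (intro has_vector_derivative_cesaro_moment) auto
    moreover have "c + real (Suc k) = c + real k + 1"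
      by simp
    ultimately show ?thesis
      by (simp only: has_vector_derivative_scaleR_const)
  qed
qed (use assms in auto)

definition weyl_int_lborel :: "real \<Rightarrow> (real \<Rightarrow> complex) \<Rightarrow> real \<Rightarrow> complex" where
  "weyl_int_lborel \<gamma> F x =
     (1 / Gamma \<gamma>) *\<^sub>R (\<integral>u. (indicator {0<..} u * u powr (\<gamma> - 1)) *\<^sub>R F (x + u) \<partial>lborel)"

lemma weyl_int_eq_weyl_int_lborel:
  fixes F G :: "real \<Rightarrow> complex"
  assumes int: "integrable lborel (\<lambda>u. (indicator {0<..} u * u powr (\<gamma> - 1)) *\<^sub>R F (x + u))"
    and eq: "\<And>s. s \<ge> x \<Longrightarrow> G s = F s"
  shows "weyl_int \<gamma> G x = weyl_int_lborel \<gamma> F x"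
proof -
  define H where "H s = indicator {x..} s *\<^sub>R ((s - x) powr (\<gamma> - 1) *\<^sub>R F s)" for s
  have shift: "(\<lambda>u. H (x + u)) = (\<lambda>u. (indicator {0<..} u * u powr (\<gamma> - 1)) *\<^sub>R F (x + u))"
    unfolding H_def by (force simp: fun_eq_iff indicator_def)
  then have "integrable lborel H"
    using lborel_integrable_real_affine_iff[of 1 H x] int by simp
  then have "set_integrable lborel {x..} (\<lambda>s. (s - x) powr (\<gamma> - 1) *\<^sub>R F s)"
    unfolding set_integrable_def H_def .
  then have "integral {x..} (\<lambda>s. (s - x) powr (\<gamma> - 1) *\<^sub>R F s) = (\<integral>s. H s \<partial>lborel)"
    using set_borel_integral_eq_integral(2) unfolding set_lebesgue_integral_def H_def by metis
  also have "\<dots> = (\<integral>u. H (x + u) \<partial>lborel)"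
    using lborel_integral_real_affine[of 1 H x] by simp
  also have "integral {x..} (\<lambda>s. (s - x) powr (\<gamma> - 1) *\<^sub>R F s) =
             integral {x..} (\<lambda>s. (s - x) powr (\<gamma> - 1) *\<^sub>R G s)"
    by (rule integral_cong) (simp add: eq)
  finally show ?thesis
    unfolding weyl_int_def weyl_int_lborel_def shift by simp
qed

lemma lborel_integral_weyl_kernel_scale:
  fixes F :: "real \<Rightarrow> 'b::{banach, second_countable_topology}"
  assumes "r > 0"
  shows "(\<integral>v. (indicator {0<..} v * v powr (\<gamma> - 1)) *\<^sub>R F (r * v) \<partial>lborel) =
           r powr (-\<gamma>) *\<^sub>R (\<integral>u. (indicator {0<..} u * u powr (\<gamma> - 1)) *\<^sub>R F u \<partial>lborel)"
    and "integrable lborel (\<lambda>u. (indicator {0<..} u * u powr (\<gamma> - 1)) *\<^sub>R F u) \<Longrightarrow>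
           integrable lborel (\<lambda>v. (indicator {0<..} v * v powr (\<gamma> - 1)) *\<^sub>R F (r * v))"
proof -
  define H where "H u = (indicator {0<..} u * u powr (\<gamma> - 1)) *\<^sub>R F u" for u
  have scaled: "(indicator {0<..} v * v powr (\<gamma> - 1)) *\<^sub>R F (r * v) = r powr (1 - \<gamma>) *\<^sub>R H (0 + r * v)" for v
  proof (cases "v > 0")
    case True
    have "r powr (1 - \<gamma>) * (r * v) powr (\<gamma> - 1) = v powr (\<gamma> - 1)"
      using \<open>r > 0\<close> True by (simp add: powr_mult powr_add[symmetric] mult.assoc[symmetric])
    then show ?thesis
      unfolding H_def using True \<open>r > 0\<close> by simp
  qed (use \<open>r > 0\<close> in \<open>simp add: H_def zero_less_mult_iff\<close>)
  have "(\<integral>u. H u \<partial>lborel) = r *\<^sub>R (\<integral>v. H (0 + r * v) \<partial>lborel)"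
    using lborel_integral_real_affine[of r H 0] \<open>r > 0\<close> by simp
  moreover have "r powr (1 - \<gamma>) = r * r powr (-\<gamma>)"
    using \<open>r > 0\<close> powr_add[of r 1 "-\<gamma>"] by simp
  ultimately show "(\<integral>v. (indicator {0<..} v * v powr (\<gamma> - 1)) *\<^sub>R F (r * v) \<partial>lborel) =
                   r powr (-\<gamma>) *\<^sub>R (\<integral>u. (indicator {0<..} u * u powr (\<gamma> - 1)) *\<^sub>R F u \<partial>lborel)"
    unfolding scaled H_def[symmetric] using \<open>r > 0\<close> by simp
  assume "integrable lborel (\<lambda>u. (indicator {0<..} u * u powr (\<gamma> - 1)) *\<^sub>R F u)"
  then have "integrable lborel (\<lambda>v. H (0 + r * v))"
    unfolding H_def[symmetric] by (rule lborel_integrable_real_affine) (use \<open>r > 0\<close> in simp)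
  then show "integrable lborel (\<lambda>v. (indicator {0<..} v * v powr (\<gamma> - 1)) *\<^sub>R F (r * v))"
    unfolding scaled by simp
qed

text \<open>The integrand of \<open>W\<^sub>+\<^sup>-\<^sup>\<gamma> (\<C>\<^sub>\<beta> F) (t)\<close> as a function of the Cesaro variable \<open>r\<close>
  and the Weyl variable \<open>v\<close>; exchanging the two integrations is the heart of the proof.\<close>
definition weyl_cesaro_integrand ::
    "real \<Rightarrow> real \<Rightarrow> real \<Rightarrow> (real \<Rightarrow> complex) \<Rightarrow> real \<Rightarrow> real \<Rightarrow> complex" where
  "weyl_cesaro_integrand \<beta> \<gamma> t F r v =
     (indicator {0<..<1} r * (1 - r) powr (\<beta> - 1) * (indicator {0<..} v * v powr (\<gamma> - 1))) *\<^sub>R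
       F ((t + v) * r)"

lemma weyl_cesaro_integrand_section:
  assumes "r \<in> {0<..<1}"
  shows "weyl_cesaro_integrand \<beta> \<gamma> t F r v =
           (1 - r) powr (\<beta> - 1) *\<^sub>R ((indicator {0<..} v * v powr (\<gamma> - 1)) *\<^sub>R F (t * r + r * v))"
  using assms by (simp add: weyl_cesaro_integrand_def algebra_simps)

lemma weyl_cesaro_integrand_integral_v:
  fixes F :: "real \<Rightarrow> complex"
  assumes "\<gamma> > 0"
  shows "(\<integral>v. weyl_cesaro_integrand \<beta> \<gamma> t F r v \<partial>lborel) = Gamma \<gamma> *\<^sub>R
           ((indicator {0<..<1} r * ((1 - r) powr (\<beta> - 1) * r powr (-\<gamma>))) *\<^sub>R weyl_int_lborel \<gamma> F (t * r))"
proof (cases "r \<in> {0<..<1}")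
  case True
  then have "(\<integral>v. weyl_cesaro_integrand \<beta> \<gamma> t F r v \<partial>lborel) = (1 - r) powr (\<beta> - 1) *\<^sub>R
               (r powr (-\<gamma>) *\<^sub>R (\<integral>u. (indicator {0<..} u * u powr (\<gamma> - 1)) *\<^sub>R F (t * r + u) \<partial>lborel))"
    using lborel_integral_weyl_kernel_scale(1)[of r \<gamma> "\<lambda>u. F (t * r + u)"]
    by (simp only: weyl_cesaro_integrand_section[OF True] Bochner_Integration.integral_scaleR_right) simp
  moreover have "Gamma \<gamma> \<noteq> 0"
    using Gamma_real_pos[OF assms] by simp
  ultimately show ?thesis
    using True by (simp add: weyl_int_lborel_def)
qed (simp add: weyl_cesaro_integrand_def)

lemma D_plus_zero: "D_plus 0 F = F"
  by (simp add: fun_eq_iff D_plus_def weyl_deriv_def)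

lemma weyl_deriv_of_nat: "weyl_deriv (real m) F x = (-1) ^ m * nth_deriv m F x"
  by (simp add: weyl_deriv_def)

lemma weyl_deriv_non_nat:
  assumes "\<alpha> \<ge> 0" "\<alpha> \<notin> \<nat>"
  obtains n where "0 < real n - \<alpha>" "real n - \<alpha> < 1"
    and "\<And>F x. weyl_deriv \<alpha> F x = (-1) ^ n * nth_deriv n (weyl_int (real n - \<alpha>) F) x"
proof
  have "real_of_int \<lfloor>\<alpha>\<rfloor> \<noteq> \<alpha>"
    using assms by (metis of_nat_in_Nats of_nat_nat zero_le_floor)
  then show "0 < real (nat \<lfloor>\<alpha>\<rfloor> + 1) - \<alpha>" "real (nat \<lfloor>\<alpha>\<rfloor> + 1) - \<alpha> < 1"
    using assms(1) by linarith+
  show "weyl_deriv \<alpha> F x = (-1) ^ (nat \<lfloor>\<alpha>\<rfloor> + 1) *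
          nth_deriv (nat \<lfloor>\<alpha>\<rfloor> + 1) (weyl_int (real (nat \<lfloor>\<alpha>\<rfloor> + 1) - \<alpha>) F) x" for F x
    using assms(2) by (simp add: weyl_deriv_def Let_def)
qed

text \<open>Both cases of the theorem have the same shape: \<open>W\<^sub>+\<^sup>\<alpha>\<close> is \<open>(-1)\<^sup>n d\<^sup>n/dt\<^sup>n\<close> after a
  transformation \<open>T\<close> (the identity or \<open>W\<^sub>+\<^sup>-\<^sup>(\<^sup>n\<^sup>-\<^sup>\<alpha>\<^sup>)\<close>) that turns \<open>\<C>\<^sub>\<beta> f\<close> into a Cesaro moment
  of \<open>T f\<close>. Differentiating \<open>n\<close> times raises the exponent to \<open>\<alpha>\<close>, and \<open>t\<^sup>\<alpha> r\<^sup>\<alpha> = (t r)\<^sup>\<alpha>\<close>.\<close>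
lemma D_plus_cesaro_eq_from_moments:
  fixes T :: "(real \<Rightarrow> complex) \<Rightarrow> real \<Rightarrow> complex" and h :: "nat \<Rightarrow> real \<Rightarrow> complex"
  assumes "\<alpha> > 0" "\<beta> > 0" "\<alpha> - real n > -1"
    and weyl: "\<And>F x. weyl_deriv \<alpha> F x = (-1) ^ n * nth_deriv n (T F) x"
    and der: "\<And>k x. x > 0 \<Longrightarrow> (h k has_vector_derivative h (Suc k) x) (at x)"
    and bnd: "\<And>k. \<exists>M. \<forall>x>0. norm (h k x) \<le> M"
    and T_cesaro: "\<And>s. s > 0 \<Longrightarrow> T (cesaro \<beta> f) s = \<beta> *\<^sub>R cesaro_moment \<beta> (\<alpha> - real n) (h 0) s"
    and T_f: "\<And>x. x > 0 \<Longrightarrow> T f x = h 0 x"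
    and "t > 0"
  shows "D_plus \<alpha> (cesaro \<beta> f) t = cesaro \<beta> (D_plus \<alpha> f) t"
proof -
  define K where "K = t powr \<alpha> / Gamma (\<alpha> + 1) * (-1) ^ n"
  have D_plus: "D_plus \<alpha> F x = (x powr \<alpha> / Gamma (\<alpha> + 1) * (-1) ^ n) *\<^sub>R nth_deriv n (T F) x" for F x
    using \<open>\<alpha> > 0\<close> by (simp add: D_plus_def weyl scaleR_conv_of_real)
  have "nth_deriv n (T (cesaro \<beta> f)) t = \<beta> *\<^sub>R cesaro_moment \<beta> (\<alpha> - real n + real n) (h n) t"
    by (rule nth_deriv_cesaro_moment[OF assms(2,3) der bnd T_cesaro \<open>t > 0\<close>])
  then have lhs: "D_plus \<alpha> (cesaro \<beta> f) t = (\<beta> * K) *\<^sub>R cesaro_moment \<beta> \<alpha> (h n) t"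
    by (simp add: D_plus K_def)
  have pointwise: "(indicator {0<..<1} r * ((1 - r) powr (\<beta> - 1) * r powr 0)) *\<^sub>R D_plus \<alpha> f (t * r)
      = K *\<^sub>R ((indicator {0<..<1} r * ((1 - r) powr (\<beta> - 1) * r powr \<alpha>)) *\<^sub>R h n (t * r))" for r
  proof (cases "r \<in> {0<..<1}")
    case True
    then have "nth_deriv n (T f) (t * r) = h n (t * r)"
      using \<open>t > 0\<close> by (intro nth_deriv_eq_on_pos[OF der T_f]) auto
    then show ?thesis
      using True \<open>t > 0\<close> by (simp add: D_plus K_def powr_mult)
  qed simp
  obtain M where "\<forall>x>0. norm (h n x) \<le> M"
    using bnd by blast
  moreover have "continuous_on {0<..} (h n)"
    using der by (intro continuous_at_imp_continuous_on ballI has_vector_derivative_continuous) auto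
  ultimately have "integrable lborel
      (\<lambda>r. (indicator {0<..<1} r * ((1 - r) powr (\<beta> - 1) * r powr \<alpha>)) *\<^sub>R h n (t * r))"
    using assms(1,2,9) by (intro integrable_cesaro_moment_integrand) auto
  then have "integrable lborel
      (\<lambda>r. (indicator {0<..<1} r * ((1 - r) powr (\<beta> - 1) * r powr 0)) *\<^sub>R D_plus \<alpha> f (t * r))"
    unfolding pointwise by (rule integrable_scaleR_right)
  then have "cesaro \<beta> (D_plus \<alpha> f) t = \<beta> *\<^sub>R cesaro_moment \<beta> 0 (D_plus \<alpha> f) t"
    by (rule cesaro_eq_cesaro_moment)
  also have "\<dots> = (\<beta> * K) *\<^sub>R cesaro_moment \<beta> \<alpha> (h n) t"
    by (simp only: cesaro_moment_def pointwise Bochner_Integration.integral_scaleR_right) simp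
  finally show ?thesis
    using lhs by simp
qed

locale schwartz_extension =
  fixes f :: "real \<Rightarrow> complex" and \<phi> :: "nat \<Rightarrow> real \<Rightarrow> complex"
  assumes extends: "\<And>x. x \<ge> 0 \<Longrightarrow> \<phi> 0 x = f x"
    and continuous: "\<And>k. continuous_on UNIV (\<phi> k)"
    and deriv: "\<And>k x. x > 0 \<Longrightarrow> (\<phi> k has_vector_derivative \<phi> (Suc k) x) (at x)"
    and bounded: "\<And>k. \<exists>C. \<forall>x\<ge>0. norm (\<phi> k x) \<le> C"
    and decay: "\<And>k. \<exists>C. \<forall>x\<ge>0. x ^ 2 * norm (\<phi> k x) \<le> C"

text \<open>The extension \<open>\<phi> k x = f\<^sup>(\<^sup>k\<^sup>) (max 0 x)\<close> is continuous on all of \<open>\<real>\<close>, which makes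
  the integrands below Borel measurable without further case distinctions.\<close>
lemma schwartz_plus_extension:
  assumes "schwartz_plus f"
  obtains \<phi> where "schwartz_extension f \<phi>"
proof -
  obtain fs :: "nat \<Rightarrow> real \<Rightarrow> complex" where
    f0: "\<forall>t\<ge>0. fs 0 t = f t" and
    fd: "\<forall>n. \<forall>t\<ge>0. (fs n has_vector_derivative fs (Suc n) t) (at t within {0..})" and
    fb: "\<forall>m n. \<exists>C. \<forall>t\<ge>0. norm (t ^ m *\<^sub>R fs n t) \<le> C"
    using assms unfolding schwartz_plus_def by blast
  have "schwartz_extension f (\<lambda>k x. fs k (max 0 x))"
  proof
    show "fs 0 (max 0 x) = f x" if "x \<ge> 0" for x
      using f0 that by simp
    show "continuous_on UNIV (\<lambda>x. fs k (max 0 x))" for k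
    proof -
      have "continuous_on {0..} (fs k)"
        unfolding continuous_on_eq_continuous_within
        using fd has_vector_derivative_continuous by blast
      then show ?thesis
        by (rule continuous_on_compose2) (auto intro!: continuous_intros)
    qed
    show "((\<lambda>x. fs k (max 0 x)) has_vector_derivative fs (Suc k) (max 0 x)) (at x)"
      if "x > 0" for k x
    proof -
      have "at x within {0..} = at x"
        by (rule at_within_interior) (use that in simp)
      moreover have "(fs k has_vector_derivative fs (Suc k) x) (at x within {0..})"
        using fd that by simp
      ultimately have "(fs k has_vector_derivative fs (Suc k) x) (at x)"
        by simp
      then have "((\<lambda>x. fs k (max 0 x)) has_vector_derivative fs (Suc k) x) (at x)"
        by (rule has_vector_derivative_transform_within_open[of _ _ _ "{0<..}"]) (use that in auto)
      then show ?thesis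
        using that by simp
    qed
    show "\<exists>C. \<forall>x\<ge>0. norm (fs k (max 0 x)) \<le> C" for k
      using fb[rule_format, of 0 k] by auto
    show "\<exists>C. \<forall>x\<ge>0. x ^ 2 * norm (fs k (max 0 x)) \<le> C" for k
      using fb[rule_format, of 2 k] by auto
  qed
  then show ?thesis by (rule that)
qed

context schwartz_extension
begin

lemma borel_measurable_phi [measurable]: "\<phi> k \<in> borel_measurable borel"
  using continuous by (rule borel_measurable_continuous_onI)

lemma weyl_kernel_phi_dominated:
  assumes "0 < \<gamma>" "\<gamma> \<le> 1"
  shows "\<exists>B. integrable lborel B \<and>
           (\<forall>x\<ge>0. \<forall>u. norm ((indicator {0<..} u * u powr (\<gamma> - 1)) *\<^sub>R \<phi> k (x + u)) \<le> B u)"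
proof -
  obtain C0 C2 where C0: "\<forall>x\<ge>0. norm (\<phi> k x) \<le> C0" and C2: "\<forall>x\<ge>0. x ^ 2 * norm (\<phi> k x) \<le> C2"
    using bounded decay by meson
  have "norm ((indicator {0<..} u * u powr (\<gamma> - 1)) *\<^sub>R \<phi> k (x + u)) \<le> weyl_majorant \<gamma> C0 C2 u"
    if "x \<ge> 0" for x u
    by (rule norm_weyl_kernel_le_majorant[OF assms that]) (use C0 C2 in auto)
  then show ?thesis
    using integrable_weyl_majorant[OF assms(1)] by blast
qed

lemma integrable_weyl_kernel_phi:
  assumes "0 < \<gamma>" "\<gamma> \<le> 1" "x \<ge> 0"
  shows "integrable lborel (\<lambda>u. (indicator {0<..} u * u powr (\<gamma> - 1)) *\<^sub>R \<phi> k (x + u))"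
proof -
  obtain B where "integrable lborel B"
    and B: "\<And>x u. x \<ge> 0 \<Longrightarrow> norm ((indicator {0<..} u * u powr (\<gamma> - 1)) *\<^sub>R \<phi> k (x + u)) \<le> B u"
    using weyl_kernel_phi_dominated[OF assms(1,2), of k] by blast
  show ?thesis
  proof (rule Bochner_Integration.integrable_bound[OF \<open>integrable lborel B\<close>])
    show "AE u in lborel. norm ((indicator {0<..} u * u powr (\<gamma> - 1)) *\<^sub>R \<phi> k (x + u)) \<le> norm (B u)"
      using order_trans[OF B[OF assms(3)] abs_ge_self] by (intro AE_I2) simp
    show "(\<lambda>u. (indicator {0<..} u * u powr (\<gamma> - 1)) *\<^sub>R \<phi> k (x + u)) \<in> borel_measurable lborel"
      by measurable
  qed
qed

lemma weyl_int_eq_lborel: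
  assumes "0 < \<gamma>" "\<gamma> \<le> 1" "x \<ge> 0"
  shows "weyl_int \<gamma> f x = weyl_int_lborel \<gamma> (\<phi> 0) x"
proof (rule weyl_int_eq_weyl_int_lborel)
  show "integrable lborel (\<lambda>u. (indicator {0<..} u * u powr (\<gamma> - 1)) *\<^sub>R \<phi> 0 (x + u))"
    using assms by (rule integrable_weyl_kernel_phi)
  show "f s = \<phi> 0 s" if "s \<ge> x" for s
    using extends[of s] that assms(3) by simp
qed

lemma has_vector_derivative_weyl_int_lborel:
  assumes "0 < \<gamma>" "\<gamma> \<le> 1" "x > 0"
  shows "(weyl_int_lborel \<gamma> (\<phi> k) has_vector_derivative weyl_int_lborel \<gamma> (\<phi> (Suc k)) x) (at x)"
proof -
  obtain B where "integrable lborel B"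
    and B: "\<And>s u. s \<ge> 0 \<Longrightarrow>
              norm ((indicator {0<..} u * u powr (\<gamma> - 1)) *\<^sub>R \<phi> (Suc k) (s + u)) \<le> B u"
    using weyl_kernel_phi_dominated[OF assms(1,2), of "Suc k"] by blast
  have pos: "s > 0" if "s \<in> ball x x" for s
    using that by (auto simp: dist_real_def)
  have "((\<lambda>s. \<integral>u. (indicator {0<..} u * u powr (\<gamma> - 1)) *\<^sub>R \<phi> k (s + u) \<partial>lborel)
         has_vector_derivative
         (\<integral>u. (indicator {0<..} u * u powr (\<gamma> - 1)) *\<^sub>R \<phi> (Suc k) (x + u) \<partial>lborel)) (at x)"
  proof (rule has_vector_derivative_lborel_integral[where d=x and B=B])
    show "((\<lambda>s. (indicator {0<..} u * u powr (\<gamma> - 1)) *\<^sub>R \<phi> k (s + u)) has_vector_derivative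
           (indicator {0<..} u * u powr (\<gamma> - 1)) *\<^sub>R \<phi> (Suc k) (s + u)) (at s)"
      if "s \<in> ball x x" for s u
    proof (cases "u > 0")
      case True
      have "((\<lambda>s. s + u) has_vector_derivative 1) (at s)"
        by (auto intro!: derivative_eq_intros)
      then have "((\<phi> k \<circ> (\<lambda>s. s + u)) has_vector_derivative 1 *\<^sub>R \<phi> (Suc k) (s + u)) (at s)"
        using True pos[OF that] by (intro vector_diff_chain_at deriv) auto
      then have "((\<lambda>s. \<phi> k (s + u)) has_vector_derivative \<phi> (Suc k) (s + u)) (at s)"
        by (simp add: o_def)
      then show ?thesis
        by (rule has_vector_derivative_scaleR_const)
    qed simp
    show "integrable lborel (\<lambda>u. (indicator {0<..} u * u powr (\<gamma> - 1)) *\<^sub>R \<phi> k (s + u))"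
      if "s \<in> ball x x" for s
      using pos[OF that] assms by (intro integrable_weyl_kernel_phi) auto
    show "norm ((indicator {0<..} u * u powr (\<gamma> - 1)) *\<^sub>R \<phi> (Suc k) (s + u)) \<le> B u"
      if "s \<in> ball x x" for s u
      using pos[OF that] by (intro B) auto
    show "(\<lambda>u. (indicator {0<..} u * u powr (\<gamma> - 1)) *\<^sub>R \<phi> (Suc k) (x + u)) \<in> borel_measurable lborel"
      by measurable
  qed fact+
  then show ?thesis
    unfolding weyl_int_lborel_def by (rule has_vector_derivative_scaleR_const)
qed

lemma bounded_weyl_int_lborel:
  assumes "0 < \<gamma>" "\<gamma> \<le> 1"
  shows "\<exists>M. \<forall>x>0. norm (weyl_int_lborel \<gamma> (\<phi> k) x) \<le> M"
proof -
  obtain B where "integrable lborel B"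
    and B: "\<And>x u. x \<ge> 0 \<Longrightarrow>
              norm ((indicator {0<..} u * u powr (\<gamma> - 1)) *\<^sub>R \<phi> k (x + u)) \<le> B u"
    using weyl_kernel_phi_dominated[OF assms, of k] by blast
  have "norm (weyl_int_lborel \<gamma> (\<phi> k) x) \<le> \<bar>1 / Gamma \<gamma>\<bar> * (\<integral>u. B u \<partial>lborel)" if "x > 0" for x
  proof -
    have "norm (\<integral>u. (indicator {0<..} u * u powr (\<gamma> - 1)) *\<^sub>R \<phi> k (x + u) \<partial>lborel)
          \<le> (\<integral>u. B u \<partial>lborel)"
      using that B \<open>integrable lborel B\<close>
      by (intro Bochner_Integration.integral_norm_bound_integral integrable_weyl_kernel_phi assms) auto
    then show ?thesis
      unfolding weyl_int_lborel_def by (simp add: divide_right_mono)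
  qed
  then show ?thesis by blast
qed

lemma integrable_weyl_cesaro_integrand_section:
  assumes "0 < \<gamma>" "\<gamma> \<le> 1" "t > 0"
  shows "integrable lborel (weyl_cesaro_integrand \<beta> \<gamma> t (\<phi> 0) r)"
proof (cases "r \<in> {0<..<1}")
  case True
  then have "integrable lborel (\<lambda>v. (indicator {0<..} v * v powr (\<gamma> - 1)) *\<^sub>R \<phi> 0 (t * r + r * v))"
    using assms lborel_integral_weyl_kernel_scale(2)[of r \<gamma> "\<lambda>u. \<phi> 0 (t * r + u)"]
          integrable_weyl_kernel_phi[of \<gamma> "t * r" 0] by simp
  moreover have "weyl_cesaro_integrand \<beta> \<gamma> t (\<phi> 0) r = (\<lambda>v. (1 - r) powr (\<beta> - 1) *\<^sub>R
                   ((indicator {0<..} v * v powr (\<gamma> - 1)) *\<^sub>R \<phi> 0 (t * r + r * v)))"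
    using True by (simp add: fun_eq_iff weyl_cesaro_integrand_section)
  ultimately show ?thesis
    by (simp only: Bochner_Integration.integrable_scaleR_right)
next
  case False
  then have "weyl_cesaro_integrand \<beta> \<gamma> t (\<phi> 0) r = (\<lambda>v. 0)"
    by (simp add: fun_eq_iff weyl_cesaro_integrand_def)
  then show ?thesis
    by simp
qed

lemma integral_norm_weyl_cesaro_integrand_le:
  assumes "0 < \<gamma>" "\<gamma> \<le> 1" "t > 0"
  shows "\<exists>A. \<forall>r. (\<integral>v. norm (weyl_cesaro_integrand \<beta> \<gamma> t (\<phi> 0) r v) \<partial>lborel) \<le>
                  A * (indicator {0<..<1} r * ((1 - r) powr (\<beta> - 1) * r powr (-\<gamma>)))"
proof -
  let ?P = "weyl_cesaro_integrand \<beta> \<gamma> t (\<phi> 0)"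
  obtain B where "integrable lborel B"
    and B: "\<And>x u. x \<ge> 0 \<Longrightarrow> norm ((indicator {0<..} u * u powr (\<gamma> - 1)) *\<^sub>R \<phi> 0 (x + u)) \<le> B u"
    using weyl_kernel_phi_dominated[OF assms(1,2), of 0] by blast
  have "(\<integral>v. norm (?P r v) \<partial>lborel) \<le>
          (\<integral>u. B u \<partial>lborel) * (indicator {0<..<1} r * ((1 - r) powr (\<beta> - 1) * r powr (-\<gamma>)))" for r
  proof (cases "r \<in> {0<..<1}")
    case True
    let ?N = "\<lambda>u. norm (\<phi> 0 (t * r + u))"
    have "norm (?P r v) = (1 - r) powr (\<beta> - 1) * ((indicator {0<..} v * v powr (\<gamma> - 1)) *\<^sub>R ?N (r * v))" for v
      using True by (simp add: weyl_cesaro_integrand_section abs_mult)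
    then have "(\<integral>v. norm (?P r v) \<partial>lborel) = (1 - r) powr (\<beta> - 1) *
                 (r powr (-\<gamma>) * (\<integral>u. (indicator {0<..} u * u powr (\<gamma> - 1)) *\<^sub>R ?N u \<partial>lborel))"
      using True lborel_integral_weyl_kernel_scale(1)[of r \<gamma> ?N] by simp
    also have "(\<integral>u. (indicator {0<..} u * u powr (\<gamma> - 1)) *\<^sub>R ?N u \<partial>lborel) \<le> (\<integral>u. B u \<partial>lborel)"
      using True assms integrable_norm[OF integrable_weyl_kernel_phi[of \<gamma> "t * r" 0]] B[of "t * r"]
      by (intro integral_mono \<open>integrable lborel B\<close>) (auto simp: abs_mult)
    finally show ?thesis
      using True by (auto simp: mult_left_mono algebra_simps)
  qed (simp add: weyl_cesaro_integrand_def)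
  then show ?thesis by blast
qed

lemma integrable_weyl_cesaro_integrand:
  assumes "0 < \<gamma>" "\<gamma> < 1" "\<beta> > 0" "t > 0"
  shows "integrable (lborel \<Otimes>\<^sub>M lborel) (case_prod (weyl_cesaro_integrand \<beta> \<gamma> t (\<phi> 0)))"
proof (rule lborel_pair.Fubini_integrable)
  let ?P = "weyl_cesaro_integrand \<beta> \<gamma> t (\<phi> 0)"
  let ?w = "\<lambda>r. indicator {0<..<1} r * ((1 - r) powr (\<beta> - 1) * r powr (-\<gamma>))"
  show meas: "case_prod ?P \<in> borel_measurable (lborel \<Otimes>\<^sub>M lborel)"
    unfolding weyl_cesaro_integrand_def by measurable
  obtain A where bound: "\<And>r. (\<integral>v. norm (?P r v) \<partial>lborel) \<le> A * ?w r"
    using integral_norm_weyl_cesaro_integrand_le[OF assms(1) less_imp_le[OF assms(2)] assms(4)] by blast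
  show "integrable lborel (\<lambda>r. \<integral>v. norm (case_prod ?P (r, v)) \<partial>lborel)"
  proof (rule Bochner_Integration.integrable_bound[OF _ _ AE_I2])
    show "integrable lborel (\<lambda>r. A * ?w r)"
      using integrable_beta_weight[OF assms(3), of "-\<gamma>"] assms by simp
    have "(\<lambda>(r, v). norm (?P r v)) \<in> borel_measurable (lborel \<Otimes>\<^sub>M lborel)"
      using meas by measurable
    then show "(\<lambda>r. \<integral>v. norm (case_prod ?P (r, v)) \<partial>lborel) \<in> borel_measurable lborel"
      by (simp add: lborel.borel_measurable_lebesgue_integral)
    have "0 \<le> (\<integral>v. norm (?P r v) \<partial>lborel)" for r
      by (rule integral_nonneg_AE) simp
    then show "norm (\<integral>v. norm (case_prod ?P (r, v)) \<partial>lborel) \<le> norm (A * ?w r)" for r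
      using bound[of r] unfolding real_norm_def by simp
  qed
  show "AE r in lborel. integrable lborel (\<lambda>v. case_prod ?P (r, v))"
    using assms integrable_weyl_cesaro_integrand_section by simp
qed

lemma cesaro_eq_cesaro_moment_phi:
  assumes "\<beta> > 0" "s > 0"
  shows "cesaro \<beta> f s = \<beta> *\<^sub>R cesaro_moment \<beta> 0 (\<phi> 0) s"
proof -
  obtain M where "\<forall>x\<ge>0. norm (\<phi> 0 x) \<le> M"
    using bounded by blast
  then have "integrable lborel
               (\<lambda>r. (indicator {0<..<1} r * ((1 - r) powr (\<beta> - 1) * r powr 0)) *\<^sub>R \<phi> 0 (s * r))"
    using assms continuous_on_subset[OF continuous]
    by (intro integrable_cesaro_moment_integrand[where M=M]) auto
  then have "cesaro \<beta> (\<phi> 0) s = \<beta> *\<^sub>R cesaro_moment \<beta> 0 (\<phi> 0) s"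
    by (rule cesaro_eq_cesaro_moment)
  moreover have "cesaro \<beta> f s = cesaro \<beta> (\<phi> 0) s"
    unfolding cesaro_def using assms extends by (intro arg_cong[where f="scaleR \<beta>"] integral_cong) auto
  ultimately show ?thesis
    by simp
qed

lemma weyl_cesaro_integrand_integral_r:
  assumes "\<beta> > 0" "t > 0"
  shows "(\<integral>r. weyl_cesaro_integrand \<beta> \<gamma> t (\<phi> 0) r v \<partial>lborel) =
           (1 / \<beta>) *\<^sub>R ((indicator {0<..} v * v powr (\<gamma> - 1)) *\<^sub>R cesaro \<beta> f (t + v))"
proof (cases "v > 0")
  case True
  have "(\<lambda>r. weyl_cesaro_integrand \<beta> \<gamma> t (\<phi> 0) r v) = (\<lambda>r. v powr (\<gamma> - 1) *\<^sub>R
           ((indicator {0<..<1} r * ((1 - r) powr (\<beta> - 1) * r powr 0)) *\<^sub>R \<phi> 0 ((t + v) * r)))"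
    using True by (simp add: fun_eq_iff weyl_cesaro_integrand_def indicator_def)
  then have "(\<integral>r. weyl_cesaro_integrand \<beta> \<gamma> t (\<phi> 0) r v \<partial>lborel) =
               v powr (\<gamma> - 1) *\<^sub>R cesaro_moment \<beta> 0 (\<phi> 0) (t + v)"
    by (simp only: cesaro_moment_def Bochner_Integration.integral_scaleR_right)
  then show ?thesis
    using True assms cesaro_eq_cesaro_moment_phi[of \<beta> "t + v"] by simp
qed (simp add: weyl_cesaro_integrand_def)

lemma weyl_int_cesaro:
  assumes "0 < \<gamma>" "\<gamma> < 1" "\<beta> > 0" "t > 0"
  shows "weyl_int \<gamma> (cesaro \<beta> f) t = \<beta> *\<^sub>R cesaro_moment \<beta> (-\<gamma>) (weyl_int_lborel \<gamma> (\<phi> 0)) t"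
proof -
  let ?P = "weyl_cesaro_integrand \<beta> \<gamma> t (\<phi> 0)"
  have int: "integrable (lborel \<Otimes>\<^sub>M lborel) (case_prod ?P)"
    using assms by (rule integrable_weyl_cesaro_integrand)
  have "Gamma \<gamma> \<noteq> 0"
    using Gamma_real_pos[OF assms(1)] by simp
  note r_integral = weyl_cesaro_integrand_integral_r[OF assms(3,4)]
  note v_integral = weyl_cesaro_integrand_integral_v[OF assms(1)]
  have "integrable lborel
          (\<lambda>v. (1 / \<beta>) *\<^sub>R ((indicator {0<..} v * v powr (\<gamma> - 1)) *\<^sub>R cesaro \<beta> f (t + v)))"
    using lborel_pair.integrable_snd[OF int] by (simp only: r_integral)
  then have "integrable lborel
          (\<lambda>v. \<beta> *\<^sub>R ((1 / \<beta>) *\<^sub>R ((indicator {0<..} v * v powr (\<gamma> - 1)) *\<^sub>R cesaro \<beta> f (t + v))))"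
    by (rule integrable_scaleR_right)
  then have "integrable lborel (\<lambda>v. (indicator {0<..} v * v powr (\<gamma> - 1)) *\<^sub>R cesaro \<beta> f (t + v))"
    using assms(3) by simp
  then have "weyl_int \<gamma> (cesaro \<beta> f) t = weyl_int_lborel \<gamma> (cesaro \<beta> f) t"
    by (rule weyl_int_eq_weyl_int_lborel) simp
  also have "\<dots> = (\<beta> / Gamma \<gamma>) *\<^sub>R (\<integral>v. (\<integral>r. ?P r v \<partial>lborel) \<partial>lborel)"
    using assms
    by (simp only: r_integral Bochner_Integration.integral_scaleR_right weyl_int_lborel_def) simp
  also have "\<dots> = (\<beta> / Gamma \<gamma>) *\<^sub>R (\<integral>r. (\<integral>v. ?P r v \<partial>lborel) \<partial>lborel)"
    by (simp only: lborel_pair.Fubini_integral[OF int])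
  also have "\<dots> = \<beta> *\<^sub>R cesaro_moment \<beta> (-\<gamma>) (weyl_int_lborel \<gamma> (\<phi> 0)) t"
    using \<open>Gamma \<gamma> \<noteq> 0\<close>
    by (simp only: v_integral cesaro_moment_def Bochner_Integration.integral_scaleR_right) simp
  finally show ?thesis .
qed

lemma D_plus_cesaro_of_nat:
  assumes "\<beta> > 0" "m > 0" "t > 0"
  shows "D_plus (real m) (cesaro \<beta> f) t = cesaro \<beta> (D_plus (real m) f) t"
proof (rule D_plus_cesaro_eq_from_moments[where T="\<lambda>F. F" and h=\<phi> and n=m])
  show "\<exists>M. \<forall>x>0. norm (\<phi> k x) \<le> M" for k
    using bounded[of k] by (meson less_imp_le)
  show "cesaro \<beta> f s = \<beta> *\<^sub>R cesaro_moment \<beta> (real m - real m) (\<phi> 0) s" if "s > 0" for s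
    using cesaro_eq_cesaro_moment_phi[OF assms(1) that] by simp
qed (use assms deriv extends weyl_deriv_of_nat in auto)

lemma D_plus_cesaro_non_nat:
  assumes "\<alpha> \<ge> 0" "\<alpha> \<notin> \<nat>" "\<beta> > 0" "t > 0"
  shows "D_plus \<alpha> (cesaro \<beta> f) t = cesaro \<beta> (D_plus \<alpha> f) t"
proof -
  obtain n where \<gamma>: "0 < real n - \<alpha>" "real n - \<alpha> < 1"
    and weyl: "\<And>F x. weyl_deriv \<alpha> F x = (-1) ^ n * nth_deriv n (weyl_int (real n - \<alpha>) F) x"
    using weyl_deriv_non_nat[OF assms(1,2)] by blast
  show ?thesis
  proof (rule D_plus_cesaro_eq_from_moments[OF _ assms(3) _ weyl, where h="\<lambda>k. weyl_int_lborel (real n - \<alpha>) (\<phi> k)"])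
    show "weyl_int (real n - \<alpha>) (cesaro \<beta> f) s =
            \<beta> *\<^sub>R cesaro_moment \<beta> (\<alpha> - real n) (weyl_int_lborel (real n - \<alpha>) (\<phi> 0)) s" if "s > 0" for s
      using weyl_int_cesaro[OF \<gamma> assms(3) that] by simp
  qed (use assms \<gamma> has_vector_derivative_weyl_int_lborel bounded_weyl_int_lborel weyl_int_eq_lborel
    in \<open>auto simp: Nats_def\<close>)
qed

end

theorem lemma3p2:
  fixes \<alpha> \<beta> :: real and f :: "real \<Rightarrow> complex"
  assumes "\<alpha> \<ge> 0" and "\<beta> > 0" and "schwartz_plus f"
  shows "\<forall>t>0. D_plus \<alpha> (cesaro \<beta> f) t = cesaro \<beta> (D_plus \<alpha> f) t"
proof (intro allI impI)
  fix t :: real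
  assume "t > 0"
  obtain \<phi> where "schwartz_extension f \<phi>"
    using schwartz_plus_extension[OF assms(3)] .
  then interpret schwartz_extension f \<phi> .
  consider "\<alpha> = 0" | m where "\<alpha> = real m" "m > 0" | "\<alpha> \<notin> \<nat>"
    by (metis Nats_cases gr0I of_nat_0)
  then show "D_plus \<alpha> (cesaro \<beta> f) t = cesaro \<beta> (D_plus \<alpha> f) t"
  proof cases
    case 1
    then show ?thesis by (simp add: D_plus_zero)
  next
    case 2
    then show ?thesis using D_plus_cesaro_of_nat assms(2) \<open>t > 0\<close> by simp
  next
    case 3
    then show ?thesis using D_plus_cesaro_non_nat assms(1,2) \<open>t > 0\<close> by simp
  qed
qed

end
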